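(* Let $\mathcal{G}$ be an $A$-compatible P-graph satisfying condition ( * ) below. Let $k\in\{1,\dots,d+1\}$, $\widetilde B\in\mathcal{B}^k$, $\ell\in\{1,\dots,m+1\}\setminus\widetilde B$, $B=\widetilde B\cup\{\ell\}$, and $\zeta\in\Theta_\mathcal{G}(F,B)$. Then: (i) for every $r\in\{1,\dots,d\}$ and $i\in B$, any directed path from $j_r$ to $i$ in $\zeta$ contains no edge of $\mathcal{E}^-$. (ii) If $\zeta'\in\Theta_\mathcal{G}(B)$ is such that for all $r=1,\dots,d$ the connected component of $\zeta'$ containing $j_r$ has root $g_\zeta(j_r)$, then the connected component of $\zeta'$ containing $m+1$ has root $g_\zeta(m+1)$; in particular $\zeta'\in\Theta_\mathcal{G}(F,B)$. Condition ( * ): for every $\ell'\in\{1,\dots,m\}$ and $i\in\{1,\dots,d\}$, every directed path in $\mathcal{G}$ from $j_i$ to $\ell'$ that contains an edge in $\mathcal{E}^-$ goes through $m+1$.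
   Context: $R$ is a partially ordered commutative ring. Let $d\ge0$, $m_0,\dots,m_d\ge0$ with $m=m_0+\cdots+m_d$. $A\in R^{m\times m}$, $b\in R^m$: for $i=1,\dots,d$ the rows indexed by $\mathcal{N}_i=\{1+\sum_{j<i}m_j,\dots,\sum_{j\le i}m_j\}$ are zero outside the columns indexed by $\mathcal{N}_i$, where they form a square $A_i$, and the corresponding subvector $b^i$ has at most one nonzero entry; the last $m_0$ rows form an arbitrary $A_0\in R^{m_0\times m}$ with arbitrary $b^0$. $\mathcal{N}=\{1,\dots,m+1\}$, $\mathcal{N}_0=\{m-m_0+1,\dots,m+1\}$, $\mathcal{N}_{d+1}=\{m+1\}$. Fixed $j_i\in\mathcal{N}_i$ with $b_j=0$ for all $j\le m-m_0$, $j\notin\{j_1,\dots,j_d\}$; $F=\{j_1,\dots,j_d,m+1\}$. $\mathcal{B}^k=\{\{w_j:j\in\{1,\dots,d+1\}\setminus\{k\}\}: w_j\in\mathcal{N}_j\}$. A multidigraph $\mathcal{G}=(\mathcal{N},\mathcal{E})$ has source/target maps $s,t$, no self-loops, labeling $\pi\colon\mathcal{E}\to R$, Laplacian $L_{ij}=\sum_{e:s(e)=j,t(e)=i}\pi(e)$ ($i\ne j$), $L_{ii}=-\sum_{k\ne i}L_{ki}$. $\mathcal{G}$ is $A$-compatible if (i) no edge goes from a node in $\mathcal{N}_i$ ($i\ge0$) to a node in $\mathcal{N}_j$ with $i\ne j$, $j\ge1$; (ii) for $\ell\notin F$ the $\ell$-th row of $L$ equals the $\ell$-th row of $(A\,|\,b)$.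 Trees/forests: subgraphs with acyclic underlying undirected graph (connected for trees), rooted at $N$ if $N$ is the only node without outgoing edges; spanning means node set $\mathcal{N}$; forests are identified with edge sets. $\Theta_\mathcal{G}(B)$: spanning forests with $|B|$ components, each a tree rooted at a node of $B$; $\Theta_\mathcal{G}(F,B)$ ($|F|=|B|$): those of them in which moreover each component contains a node of $F$. For $\zeta\in\Theta_\mathcal{G}(F,B)$, $g_\zeta\colon F\to B$ maps $i$ to the root of the tree of $\zeta$ containing $i$. A cycle is a closed directed path with no repeated nodes. $\mathcal{E}^-=\{e:\pi(e)\in R_{<0}\}$, $\mathcal{E}^+=\{e:\pi(e)\in R_{>0}\}$. $\mathcal{G}$ is a P-graph if there is $\mu\colon\mathcal{E}^-\to\mathcal{P}(\mathcal{E}^+)$ with (i) $\mathcal{E}=\mathcal{E}^+\sqcup\mathcal{E}^-$; (ii) every cycle contains at most one edge of $\mathcal{E}^-$; (iii) for $e\in\mathcal{E}^-$: (a) $e'\in\mu(e)\Rightarrow s(e')=s(e)$; (b) $e'\in\mu(e)\Rightarrow$ every cycle containing $e'$ contains $t(e)$; (c) $\mu(e)\cap\mu(e')=\emptyset$ for $e\ne e'$; (iv) $\pi(e)+\sum_{e'\in\mu(e)}\pi(e')\in R_{\ge0}$ for all $e\in\mathcal{E}^-$. *)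

theory Defs
  imports Main
begin

text \<open>Nodes are 1..m+1 with m = m_0 + ... + m_d. Blocks N_1..N_d occupy the first
  m - m_0 indices, N_0 = {m - m_0 + 1 .. m+1}, N_{d+1} = {m+1}.\<close>

definition msum :: "nat \<Rightarrow> (nat \<Rightarrow> nat) \<Rightarrow> nat" where
  "msum d mm = (\<Sum>j\<le>d. mm j)"

definition blk :: "nat \<Rightarrow> (nat \<Rightarrow> nat) \<Rightarrow> nat \<Rightarrow> nat set" where
  "blk d mm i =
     (if i = 0 then {(\<Sum>j\<in>{1..d}. mm j) + 1 .. msum d mm + 1}
      else if i \<le> d then {1 + (\<Sum>j\<in>{1..<i}. mm j) .. (\<Sum>j\<in>{1..i}. mm j)}
      else if i = d + 1 then {msum d mm + 1}
      else {})"

definition Bset :: "nat \<Rightarrow> (nat \<Rightarrow> nat) \<Rightarrow> nat \<Rightarrow> nat set set" where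
  "Bset d mm k = {w ` ({1..d+1} - {k}) | w. \<forall>j\<in>{1..d+1} - {k}. w j \<in> blk d mm j}"

definition multidigraph :: "nat set \<Rightarrow> 'e set \<Rightarrow> ('e \<Rightarrow> nat) \<Rightarrow> ('e \<Rightarrow> nat) \<Rightarrow> bool" where
  "multidigraph V E s t \<longleftrightarrow> finite E \<and> (\<forall>e\<in>E. s e \<in> V \<and> t e \<in> V \<and> s e \<noteq> t e)"

definition lap_off :: "'e set \<Rightarrow> ('e \<Rightarrow> nat) \<Rightarrow> ('e \<Rightarrow> nat) \<Rightarrow> ('e \<Rightarrow> 'a::comm_ring) \<Rightarrow> nat \<Rightarrow> nat \<Rightarrow> 'a" where
  "lap_off E s t \<pi> i j = (\<Sum>e\<in>{e\<in>E. s e = j \<and> t e = i}. \<pi> e)"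

definition lap :: "nat set \<Rightarrow> 'e set \<Rightarrow> ('e \<Rightarrow> nat) \<Rightarrow> ('e \<Rightarrow> nat) \<Rightarrow> ('e \<Rightarrow> 'a::comm_ring) \<Rightarrow> nat \<Rightarrow> nat \<Rightarrow> 'a" where
  "lap V E s t \<pi> i j =
     (if i \<noteq> j then lap_off E s t \<pi> i j else - (\<Sum>k\<in>V - {i}. lap_off E s t \<pi> k i))"

definition augm :: "nat \<Rightarrow> (nat \<Rightarrow> nat \<Rightarrow> 'a) \<Rightarrow> (nat \<Rightarrow> 'a) \<Rightarrow> nat \<Rightarrow> nat \<Rightarrow> 'a" where
  "augm m A b l j = (if j = m + 1 then b l else A l j)"

definition Fset :: "nat \<Rightarrow> (nat \<Rightarrow> nat) \<Rightarrow> (nat \<Rightarrow> nat) \<Rightarrow> nat set" where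
  "Fset d mm jj = jj ` {1..d} \<union> {msum d mm + 1}"

definition A_compatible ::
  "nat \<Rightarrow> (nat \<Rightarrow> nat) \<Rightarrow> (nat \<Rightarrow> nat \<Rightarrow> 'a::comm_ring) \<Rightarrow> (nat \<Rightarrow> 'a) \<Rightarrow> (nat \<Rightarrow> nat)
   \<Rightarrow> 'e set \<Rightarrow> ('e \<Rightarrow> nat) \<Rightarrow> ('e \<Rightarrow> nat) \<Rightarrow> ('e \<Rightarrow> 'a) \<Rightarrow> bool" where
  "A_compatible d mm A b jj E s t \<pi> \<longleftrightarrow>
     (\<forall>e\<in>E. \<forall>i\<in>{0..d}. \<forall>j\<in>{1..d}. i \<noteq> j \<longrightarrow> \<not> (s e \<in> blk d mm i \<and> t e \<in> blk d mm j)) \<and>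
     (\<forall>l\<in>{1..msum d mm + 1} - Fset d mm jj. \<forall>j\<in>{1..msum d mm + 1}.
        lap {1..msum d mm + 1} E s t \<pi> l j = augm (msum d mm) A b l j)"

definition chain :: "('e \<Rightarrow> nat) \<Rightarrow> ('e \<Rightarrow> nat) \<Rightarrow> 'e list \<Rightarrow> bool" where
  "chain s t es \<longleftrightarrow> (\<forall>k. Suc k < length es \<longrightarrow> t (es ! k) = s (es ! Suc k))"

definition dpath :: "('e \<Rightarrow> nat) \<Rightarrow> ('e \<Rightarrow> nat) \<Rightarrow> 'e set \<Rightarrow> nat \<Rightarrow> 'e list \<Rightarrow> nat \<Rightarrow> bool" where
  "dpath s t S u es v \<longleftrightarrow> set es \<subseteq> S \<and> chain s t es \<and> distinct (u # map t es) \<and>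
     (if es = [] then u = v else s (hd es) = u \<and> t (last es) = v)"

definition dcycle :: "('e \<Rightarrow> nat) \<Rightarrow> ('e \<Rightarrow> nat) \<Rightarrow> 'e set \<Rightarrow> 'e list \<Rightarrow> bool" where
  "dcycle s t S es \<longleftrightarrow> es \<noteq> [] \<and> set es \<subseteq> S \<and> chain s t es \<and>
     t (last es) = s (hd es) \<and> distinct (map s es)"

definition Eneg :: "'e set \<Rightarrow> ('e \<Rightarrow> 'a::ordered_comm_ring) \<Rightarrow> 'e set" where
  "Eneg E \<pi> = {e\<in>E. \<pi> e < 0}"

definition Epos :: "'e set \<Rightarrow> ('e \<Rightarrow> 'a::ordered_comm_ring) \<Rightarrow> 'e set" where
  "Epos E \<pi> = {e\<in>E. \<pi> e > 0}"

definition P_graph :: "'e set \<Rightarrow> ('e \<Rightarrow> nat) \<Rightarrow> ('e \<Rightarrow> nat) \<Rightarrow> ('e \<Rightarrow> 'a::ordered_comm_ring) \<Rightarrow> bool" where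
  "P_graph E s t \<pi> \<longleftrightarrow> (\<exists>\<mu> :: 'e \<Rightarrow> 'e set.
     E = Epos E \<pi> \<union> Eneg E \<pi> \<and>
     (\<forall>es. dcycle s t E es \<longrightarrow> card (set es \<inter> Eneg E \<pi>) \<le> 1) \<and>
     (\<forall>e\<in>Eneg E \<pi>.
        \<mu> e \<subseteq> Epos E \<pi> \<and>
        (\<forall>e'\<in>\<mu> e. s e' = s e) \<and>
        (\<forall>e'\<in>\<mu> e. \<forall>es. dcycle s t E es \<and> e' \<in> set es \<longrightarrow> t e \<in> set (map s es)) \<and>
        (\<forall>e''\<in>Eneg E \<pi>. e'' \<noteq> e \<longrightarrow> \<mu> e \<inter> \<mu> e'' = {}) \<and>
        \<pi> e + (\<Sum>e'\<in>\<mu> e. \<pi> e') \<ge> 0))"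

definition ucycle :: "('e \<Rightarrow> nat) \<Rightarrow> ('e \<Rightarrow> nat) \<Rightarrow> 'e set \<Rightarrow> 'e list \<Rightarrow> nat list \<Rightarrow> bool" where
  "ucycle s t S es vs \<longleftrightarrow> es \<noteq> [] \<and> length vs = length es \<and> distinct es \<and> distinct vs \<and>
     set es \<subseteq> S \<and>
     (\<forall>k<length es. {s (es ! k), t (es ! k)} = {vs ! k, vs ! ((k + 1) mod length es)})"

definition uacyclic :: "('e \<Rightarrow> nat) \<Rightarrow> ('e \<Rightarrow> nat) \<Rightarrow> 'e set \<Rightarrow> bool" where
  "uacyclic s t S \<longleftrightarrow> \<not> (\<exists>es vs. ucycle s t S es vs)"

definition uedges :: "('e \<Rightarrow> nat) \<Rightarrow> ('e \<Rightarrow> nat) \<Rightarrow> 'e set \<Rightarrow> (nat \<times> nat) set" where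
  "uedges s t S = {(s e, t e) | e. e \<in> S} \<union> {(t e, s e) | e. e \<in> S}"

definition comp :: "nat set \<Rightarrow> ('e \<Rightarrow> nat) \<Rightarrow> ('e \<Rightarrow> nat) \<Rightarrow> 'e set \<Rightarrow> nat \<Rightarrow> nat set" where
  "comp V s t S u = {v\<in>V. (u, v) \<in> (uedges s t S)\<^sup>*}"

definition components :: "nat set \<Rightarrow> ('e \<Rightarrow> nat) \<Rightarrow> ('e \<Rightarrow> nat) \<Rightarrow> 'e set \<Rightarrow> nat set set" where
  "components V s t S = comp V s t S ` V"

definition noout :: "('e \<Rightarrow> nat) \<Rightarrow> 'e set \<Rightarrow> nat \<Rightarrow> bool" where
  "noout s S r \<longleftrightarrow> \<not> (\<exists>e\<in>S. s e = r)"

definition Theta :: "nat set \<Rightarrow> 'e set \<Rightarrow> ('e \<Rightarrow> nat) \<Rightarrow> ('e \<Rightarrow> nat) \<Rightarrow> nat set \<Rightarrow> 'e set set" where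
  "Theta V E s t B = {\<zeta>. \<zeta> \<subseteq> E \<and> uacyclic s t \<zeta> \<and>
     card (components V s t \<zeta>) = card B \<and>
     (\<forall>C\<in>components V s t \<zeta>. \<exists>r\<in>B \<inter> C. \<forall>v\<in>C. noout s \<zeta> v \<longleftrightarrow> v = r)}"

definition ThetaF :: "nat set \<Rightarrow> 'e set \<Rightarrow> ('e \<Rightarrow> nat) \<Rightarrow> ('e \<Rightarrow> nat) \<Rightarrow> nat set \<Rightarrow> nat set \<Rightarrow> 'e set set" where
  "ThetaF V E s t F B = {\<zeta>\<in>Theta V E s t B. \<forall>C\<in>components V s t \<zeta>. C \<inter> F \<noteq> {}}"

definition groot :: "nat set \<Rightarrow> ('e \<Rightarrow> nat) \<Rightarrow> ('e \<Rightarrow> nat) \<Rightarrow> 'e set \<Rightarrow> nat \<Rightarrow> nat" where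
  "groot V s t S i = (THE r. r \<in> comp V s t S i \<and> noout s S r)"

end

theory Submission
  imports Defs "HOL-Combinatorics.Orbits"
begin

text \<open>Since zeta has card F = card B trees and each of them meets F, distinct nodes of F lie
  in distinct trees. (i) If a path in zeta from j_r to a root used a negative edge, condition (*)
  would put m+1 on it, so j_r and m+1 would share a tree. (ii) No edge leaves the block N_0, so
  in every forest of Theta(B) the tree of m+1 is rooted in B \<inter> N_0, which is contained in
  {l, m+1}; hence that root is m+1 if m+1 \<in> B and l otherwise, the same for zeta' as for zeta.
  Then zeta' agrees with zeta on the roots of all of F, so the nodes of F again lie in card F
  distinct trees of zeta', i.e. in all of them.\<close>

lemma sym_uedges: "sym (uedges s t S)"
  unfolding uedges_def sym_def by blast

lemma comp_self: "x \<in> V \<Longrightarrow> x \<in> comp V s t S x"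
  by (simp add: comp_def)

lemma comp_eq_if_mem:
  assumes "y \<in> comp V s t S x"
  shows "comp V s t S y = comp V s t S x"
proof -
  have xy: "(x, y) \<in> (uedges s t S)\<^sup>*" using assms by (simp add: comp_def)
  then have "(y, x) \<in> (uedges s t S)\<^sup>*" by (meson sym_uedges sym_rtrancl symD)
  with xy show ?thesis unfolding comp_def by (meson rtrancl_trans)
qed

lemma comp_edge_closed:
  assumes "y \<in> comp V s t S x" "e \<in> S" "s e = y" "t e \<in> V"
  shows "t e \<in> comp V s t S x"
proof -
  have "(y, t e) \<in> uedges s t S" using assms(2,3) unfolding uedges_def by blast
  with assms(1,4) show ?thesis unfolding comp_def by (auto intro: rtrancl_into_rtrancl)
qed

lemma components_comp_eq: "C \<in> components V s t S \<Longrightarrow> z \<in> C \<Longrightarrow> comp V s t S z = C"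
  unfolding components_def using comp_eq_if_mem by blast

lemma components_selector_onto:
  assumes "\<forall>C\<in>components V s t S. g C \<in> C \<inter> A"
    and "card (components V s t S) = card A" "finite A"
  shows "g ` components V s t S = A"
proof -
  have "inj_on g (components V s t S)"
    by (rule inj_onI) (metis assms(1) IntD1 components_comp_eq)
  then have "card (g ` components V s t S) = card A" using assms(2) by (simp add: card_image)
  moreover have "g ` components V s t S \<subseteq> A" using assms(1) by blast
  ultimately show ?thesis using assms(3) by (simp add: card_subset_eq)
qed

lemma Theta_grootD:
  assumes "\<xi> \<in> Theta V E s t B" "x \<in> V"
  shows "groot V s t \<xi> x \<in> comp V s t \<xi> x \<inter> B"
    and "\<forall>w\<in>comp V s t \<xi> x. noout s \<xi> w \<longleftrightarrow> w = groot V s t \<xi> x"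
proof -
  have "comp V s t \<xi> x \<in> components V s t \<xi>" using assms(2) by (simp add: components_def)
  then obtain r where r: "r \<in> B \<inter> comp V s t \<xi> x" "\<forall>w\<in>comp V s t \<xi> x. noout s \<xi> w \<longleftrightarrow> w = r"
    using assms(1) unfolding Theta_def by blast
  then have "groot V s t \<xi> x = r" unfolding groot_def by (intro the_equality) auto
  with r show "groot V s t \<xi> x \<in> comp V s t \<xi> x \<inter> B"
    and "\<forall>w\<in>comp V s t \<xi> x. noout s \<xi> w \<longleftrightarrow> w = groot V s t \<xi> x" by auto
qed

text \<open>There are card B trees, each with its own root in B, so every node of B is a root.\<close>

lemma Theta_groot_B:
  assumes "\<xi> \<in> Theta V E s t B" "finite B" "b \<in> B"
  shows "groot V s t \<xi> b = b"
proof -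
  let ?K = "components V s t \<xi>"
  have "\<forall>C\<in>?K. \<exists>r. r \<in> C \<inter> B \<and> (\<forall>v\<in>C. noout s \<xi> v \<longleftrightarrow> v = r)"
    using assms(1) unfolding Theta_def by blast
  then obtain \<rho> where \<rho>: "\<forall>C\<in>?K. \<rho> C \<in> C \<inter> B \<and> (\<forall>v\<in>C. noout s \<xi> v \<longleftrightarrow> v = \<rho> C)"
    by metis
  have "\<rho> ` ?K = B"
    using assms(1,2) \<rho> by (intro components_selector_onto) (auto simp: Theta_def)
  then obtain C where C: "C \<in> ?K" "b = \<rho> C" using assms(3) by auto
  then have bC: "b \<in> C" and "noout s \<xi> b" using \<rho> by auto
  moreover have "b \<in> V" using C(1) bC by (auto simp: components_def comp_def)
  ultimately show ?thesis
    using Theta_grootD[OF assms(1)] components_comp_eq[OF C(1) bC] comp_self by metis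
qed

lemma ThetaF_comp_inj_on:
  assumes "\<zeta> \<in> ThetaF V E s t F B" "finite F" "card F = card B"
  shows "inj_on (comp V s t \<zeta>) F"
proof -
  let ?K = "components V s t \<zeta>"
  have "\<forall>C\<in>?K. \<exists>f. f \<in> C \<inter> F" using assms(1) unfolding ThetaF_def by blast
  then obtain g where g: "\<forall>C\<in>?K. g C \<in> C \<inter> F" by metis
  have onto: "g ` ?K = F"
    using assms g by (intro components_selector_onto) (auto simp: ThetaF_def Theta_def)
  have inv: "comp V s t \<zeta> (g C) = C" if "C \<in> ?K" for C
    using that g components_comp_eq by blast
  show ?thesis
  proof (rule inj_onI)
    fix f1 f2 assume f: "f1 \<in> F" "f2 \<in> F" "comp V s t \<zeta> f1 = comp V s t \<zeta> f2"
    then obtain C1 C2 where "C1 \<in> ?K" "f1 = g C1" "C2 \<in> ?K" "f2 = g C2" using onto by blast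
    with f(3) inv show "f1 = f2" by simp
  qed
qed

lemma funpow_periodic_point:
  assumes "finite X" "x \<in> X" "f ` X \<subseteq> X"
  shows "\<exists>y\<in>X. y \<in> orbit f y"
proof -
  have iter: "(f ^^ n) x \<in> X" for n by (induction n) (use assms in auto)
  have "card ((\<lambda>n. (f ^^ n) x) ` {0..card X}) \<le> card X"
    using iter by (intro card_mono[OF assms(1)]) auto
  then have "\<not> inj_on (\<lambda>n. (f ^^ n) x) {0..card X}" by (intro pigeonhole) simp
  then obtain i j where ij: "i < j" "(f ^^ i) x = (f ^^ j) x"
    unfolding inj_on_def by (metis linorder_neqE_nat)
  have "(f ^^ (j - i)) ((f ^^ i) x) = (f ^^ (j - i + i)) x" by (simp add: funpow_add)
  also have "\<dots> = (f ^^ i) x" using ij by simp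
  finally have "(f ^^ (j - i)) ((f ^^ i) x) = (f ^^ i) x" .
  then have "(f ^^ i) x \<in> orbit f ((f ^^ i) x)"
    using ij(1) unfolding orbit_altdef by (metis (mono_tags, lifting) mem_Collect_eq zero_less_diff)
  with iter show ?thesis by blast
qed

lemma ucycle_if_successor_closed:
  assumes "finite X" "X \<noteq> {}" "\<forall>x\<in>X. \<exists>e\<in>S. s e = x \<and> t e \<in> X"
  shows "\<exists>es vs. ucycle s t S es vs"
proof -
  obtain g where g: "\<forall>x\<in>X. g x \<in> S \<and> s (g x) = x \<and> t (g x) \<in> X" using assms(3) by metis
  define f where "f = t \<circ> g"
  have "f ` X \<subseteq> X" using g by (auto simp: f_def)
  then obtain y where y: "y \<in> X" "y \<in> orbit f y"
    using funpow_periodic_point[OF assms(1)] assms(2) by blast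
  have iter: "(f ^^ i) y \<in> X" for i by (induction i) (use y g in \<open>auto simp: f_def\<close>)
  define n where "n = funpow_dist1 f y y"
  have n: "0 < n" "(f ^^ n) y = y" using funpow_dist1_prop[OF y(2)] by (simp_all add: n_def)
  define vs where "vs = map (\<lambda>i. (f ^^ i) y) [0..<n]"
  define es where "es = map g vs"
  have "map s es = vs" using g iter by (simp add: es_def vs_def)
  moreover have "inj_on (\<lambda>i. (f ^^ i) y) {0..<n}"
    unfolding n_def by (rule inj_on_funpow_dist1[OF y(2)])
  then have "distinct vs" by (simp add: vs_def distinct_map)
  ultimately have "distinct es" by (metis distinct_map)
  have "ucycle s t S es vs"
    unfolding ucycle_def
  proof (intro conjI allI impI)
    show "es \<noteq> []" "length vs = length es" using n by (simp_all add: es_def vs_def)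
    show "set es \<subseteq> S" using g iter by (auto simp: es_def vs_def)
    fix k assume "k < length es"
    then have k: "k < n" by (simp add: es_def vs_def)
    have "t (es ! k) = (f ^^ Suc k) y" using k by (simp add: es_def vs_def f_def)
    also have "\<dots> = vs ! ((k + 1) mod length es)"
    proof (cases "Suc k < n")
      case False
      then have "n = Suc k" using k by simp
      with n show ?thesis by (simp add: es_def vs_def nth_append)
    qed (simp add: es_def vs_def)
    finally show "{s (es ! k), t (es ! k)} = {vs ! k, vs ! ((k + 1) mod length es)}"
      using k g iter by (simp add: es_def vs_def)
  qed fact+
  then show ?thesis by blast
qed

text \<open>If the root of x left Y, every node of Y in the tree of x would have an out-edge
  staying in that finite set, and the forest would contain a cycle.\<close>

lemma groot_mem_if_forward_closed:
  assumes "\<xi> \<in> Theta V E s t B" "finite V" "Y \<subseteq> V" "x \<in> Y"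
    and closed: "\<forall>e\<in>\<xi>. s e \<in> Y \<longrightarrow> t e \<in> Y"
  shows "groot V s t \<xi> x \<in> Y"
proof (rule ccontr)
  assume root_notin: "groot V s t \<xi> x \<notin> Y"
  let ?X = "comp V s t \<xi> x \<inter> Y"
  have "\<forall>y\<in>?X. \<exists>e\<in>\<xi>. s e = y \<and> t e \<in> ?X"
  proof
    fix y assume y: "y \<in> ?X"
    then have "\<not> noout s \<xi> y" using Theta_grootD(2)[OF assms(1)] assms(3,4) root_notin by auto
    then obtain e where e: "e \<in> \<xi>" "s e = y" unfolding noout_def by blast
    then have "t e \<in> Y" using closed y by blast
    then have "t e \<in> ?X" using comp_edge_closed[of y V s t \<xi> x e] y e assms(3) by blast
    with e show "\<exists>e\<in>\<xi>. s e = y \<and> t e \<in> ?X" by blast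
  qed
  moreover have "finite ?X" using assms(2) by (simp add: comp_def)
  moreover have "?X \<noteq> {}" using assms(3,4) comp_self[of x V] by blast
  ultimately obtain es vs where "ucycle s t \<xi> es vs" using ucycle_if_successor_closed by blast
  then show False using assms(1) unfolding Theta_def uacyclic_def by blast
qed

lemma groot_eq_if_forward_closed:
  assumes "\<xi> \<in> Theta V E s t B" "finite V" "finite B" "Y \<subseteq> V" "x \<in> Y"
    and "\<forall>e\<in>\<xi>. s e \<in> Y \<longrightarrow> t e \<in> Y" "B \<inter> Y \<subseteq> {r, x}"
  shows "groot V s t \<xi> x = (if x \<in> B then x else r)"
proof (cases "x \<in> B")
  case False
  have "groot V s t \<xi> x \<in> B" using Theta_grootD(1)[OF assms(1)] assms(4,5) by blast
  moreover have "groot V s t \<xi> x \<in> Y" using groot_mem_if_forward_closed assms by blast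
  ultimately show ?thesis using False assms(7) by auto
qed (simp add: Theta_groot_B[OF assms(1,3)])

lemma dpath_end_mem: "dpath s t S u es v \<Longrightarrow> v \<in> set (u # map t es)"
  by (cases "es = []") (auto simp: dpath_def)

lemma dpath_mono: "dpath s t S u es v \<Longrightarrow> S \<subseteq> S' \<Longrightarrow> dpath s t S' u es v"
  by (auto simp: dpath_def)

lemma dpath_subset_comp:
  assumes "dpath s t S u es v" "u \<in> V" "\<forall>e\<in>S. t e \<in> V"
  shows "set (u # map t es) \<subseteq> comp V s t S u"
proof -
  have sub: "set es \<subseteq> S" and ch: "chain s t es" and hd: "es \<noteq> [] \<Longrightarrow> s (hd es) = u"
    using assms(1) unfolding dpath_def by (auto split: if_splits)
  have "t (es ! k) \<in> comp V s t S u" if "k < length es" for k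
    using that
  proof (induction k)
    case 0
    then have e0: "es ! 0 \<in> S" "s (es ! 0) = u" using sub hd by (auto simp: hd_conv_nth)
    then show ?case using comp_edge_closed[OF comp_self[of u V s t S] e0] assms by blast
  next
    case (Suc k)
    then have "t (es ! k) = s (es ! Suc k)" "es ! Suc k \<in> S" using ch sub unfolding chain_def by auto
    moreover have "t (es ! k) \<in> comp V s t S u" using Suc by simp
    ultimately show ?case using comp_edge_closed assms(3) by (metis Suc.prems nth_mem subsetD)
  qed
  then show ?thesis using comp_self[of u V s t S] assms(2) by (auto simp: in_set_conv_nth)
qed

lemma ThetaF_dpath_avoids:
  assumes "\<zeta> \<in> ThetaF V E s t F B" "finite F" "card F = card B" "F \<subseteq> V" "\<forall>e\<in>\<zeta>. t e \<in> V"
    and "dpath s t \<zeta> f es v" "f \<in> F" "f' \<in> F" "f' \<noteq> f"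
  shows "f' \<notin> set (f # map t es)"
proof
  assume "f' \<in> set (f # map t es)"
  moreover have "f \<in> V" using assms(4,7) by blast
  ultimately have "f' \<in> comp V s t \<zeta> f" using dpath_subset_comp[OF assms(6) _ assms(5)] by blast
  then have "comp V s t \<zeta> f' = comp V s t \<zeta> f" by (rule comp_eq_if_mem)
  from inj_onD[OF ThetaF_comp_inj_on[OF assms(1-3)] this assms(8,7)] assms(9) show False by blast
qed

lemma Theta_in_ThetaF_if_groot_agree:
  assumes "\<zeta> \<in> ThetaF V E s t F B" "\<zeta>' \<in> Theta V E s t B"
    and "finite V" "finite F" "card F = card B" "F \<subseteq> V"
    and agree: "\<forall>f\<in>F. groot V s t \<zeta>' f = groot V s t \<zeta> f"
  shows "\<zeta>' \<in> ThetaF V E s t F B"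
proof -
  have \<zeta>: "\<zeta> \<in> Theta V E s t B" using assms(1) by (simp add: ThetaF_def)
  let ?K' = "components V s t \<zeta>'"
  have "inj_on (comp V s t \<zeta>') F"
  proof (rule inj_onI)
    fix f1 f2 assume f: "f1 \<in> F" "f2 \<in> F" "comp V s t \<zeta>' f1 = comp V s t \<zeta>' f2"
    have "groot V s t \<zeta>' f1 = groot V s t \<zeta>' f2" using f(3) by (simp add: groot_def)
    then have roots: "groot V s t \<zeta> f1 = groot V s t \<zeta> f2" using agree f(1,2) by simp
    have "comp V s t \<zeta> (groot V s t \<zeta> f) = comp V s t \<zeta> f" if "f \<in> F" for f
      using that assms(6) by (intro comp_eq_if_mem IntD1[OF Theta_grootD(1)[OF \<zeta>]]) blast
    from this[OF f(1)] this[OF f(2)] roots have "comp V s t \<zeta> f1 = comp V s t \<zeta> f2" by simp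
    from inj_onD[OF ThetaF_comp_inj_on[OF assms(1,4,5)] this f(1,2)] show "f1 = f2" .
  qed
  then have card: "card (comp V s t \<zeta>' ` F) = card ?K'"
    using assms(2,5) by (simp add: card_image Theta_def)
  have sub: "comp V s t \<zeta>' ` F \<subseteq> ?K'" using assms(6) by (auto simp: components_def)
  have "finite ?K'" using assms(3) by (simp add: components_def)
  from card_subset_eq[OF this sub card] have onto: "comp V s t \<zeta>' ` F = ?K'" .
  have "C \<inter> F \<noteq> {}" if "C \<in> ?K'" for C
  proof -
    obtain f where f: "f \<in> F" "C = comp V s t \<zeta>' f" using onto \<open>C \<in> ?K'\<close> by blast
    then have "f \<in> C" using assms(6) comp_self[of f V s t \<zeta>'] by blast
    with f(1) show ?thesis by blast
  qed
  with assms(2) show ?thesis by (simp add: ThetaF_def)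
qed

lemma blk_1_to_d: "i \<in> {1..d} \<Longrightarrow> blk d mm i = {1 + (\<Sum>j\<in>{1..<i}. mm j) .. \<Sum>j\<in>{1..i}. mm j}"
  by (auto simp: blk_def)

lemma blk_0: "blk d mm 0 = {(\<Sum>j\<in>{1..d}. mm j) + 1 .. msum d mm + 1}"
  by (simp add: blk_def)

lemma blk_Suc_d: "blk d mm (Suc d) = {msum d mm + 1}"
  by (simp add: blk_def)

lemma sum_blocks_le_msum: "(\<Sum>j\<in>{1..d}. mm j) \<le> msum d mm"
  unfolding msum_def by (rule sum_mono2) auto

lemma blk_bounds:
  assumes "i \<in> {1..d}" "x \<in> blk d mm i"
  shows "1 \<le> x" "x \<le> (\<Sum>j\<in>{1..d}. mm j)"
proof -
  have "(\<Sum>j\<in>{1..i}. mm j) \<le> (\<Sum>j\<in>{1..d}. mm j)" using assms(1) by (intro sum_mono2) auto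
  then show "1 \<le> x" "x \<le> (\<Sum>j\<in>{1..d}. mm j)" using assms blk_1_to_d by auto
qed

lemma blk_less:
  assumes "i < j" "j \<in> {1..d+1}" "i \<ge> 1" "x \<in> blk d mm i" "y \<in> blk d mm j"
  shows "x < y"
proof (cases "j = d + 1")
  case True
  then show ?thesis using assms blk_bounds[of i d x mm] sum_blocks_le_msum[of mm d] by (auto simp: blk_Suc_d)
next
  case False
  have "(\<Sum>k\<in>{1..i}. mm k) \<le> (\<Sum>k\<in>{1..<j}. mm k)" using assms(1) by (intro sum_mono2) auto
  with False show ?thesis using assms blk_1_to_d[of i d mm] blk_1_to_d[of j d mm] by auto
qed

lemma blk_eq_if_mem:
  assumes "i \<in> {1..d+1}" "j \<in> {1..d+1}" "x \<in> blk d mm i" "x \<in> blk d mm j"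
  shows "i = j"
  using assms blk_less[of i j d x mm x] blk_less[of j i d x mm x] by (metis atLeastAtMost_iff less_irrefl linorder_neqE_nat)

lemma blk_cover:
  assumes "x \<in> {1..msum d mm + 1} - blk d mm 0"
  shows "\<exists>i\<in>{1..d}. x \<in> blk d mm i"
proof -
  let ?P = "\<lambda>i. x \<le> (\<Sum>j\<in>{1..i}. mm j)"
  have x: "1 \<le> x" "?P d" using assms by (auto simp: blk_0)
  define i where "i = (LEAST i. ?P i)"
  have "?P i" "i \<le> d" using LeastI[of ?P d] Least_le[of ?P d] x(2) by (auto simp: i_def)
  moreover have "i \<noteq> 0" using \<open>?P i\<close> x(1) by (intro notI) simp
  then obtain i' where i': "i = Suc i'" by (cases i) auto
  then have "\<not> ?P i'" using not_less_Least[of i' ?P] by (simp add: i_def)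
  moreover have "{1..<i} = {1..i'}" using i' by auto
  ultimately have "x \<in> blk d mm i" using blk_1_to_d[of i d mm] \<open>i \<noteq> 0\<close> by auto
  with \<open>i \<le> d\<close> \<open>i \<noteq> 0\<close> show ?thesis by auto
qed

lemma blk_subset_nodes: "i \<in> {1..d+1} \<Longrightarrow> blk d mm i \<subseteq> {1..msum d mm + 1}"
  using blk_bounds[of i d] sum_blocks_le_msum[of mm d] by (cases "i = d + 1") (force simp: blk_Suc_d)+

lemma blk_disjoint_blk_0: "i \<in> {1..d} \<Longrightarrow> blk d mm i \<inter> blk d mm 0 = {}"
  using blk_bounds[of i d] by (fastforce simp: blk_0)

lemma Bset_card:
  assumes "k \<in> {1..d+1}" "Bt \<in> Bset d mm k"
  shows "finite Bt" "card Bt = d"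
proof -
  obtain w where w: "Bt = w ` ({1..d+1} - {k})" "\<forall>j\<in>{1..d+1} - {k}. w j \<in> blk d mm j"
    using assms(2) unfolding Bset_def by blast
  have "inj_on w ({1..d+1} - {k})" using w(2) blk_eq_if_mem by (intro inj_onI) (metis DiffD1)
  then show "finite Bt" "card Bt = d" using w(1) assms(1) by (simp_all add: card_image)
qed

lemma Bset_subset_nodes: "Bt \<in> Bset d mm k \<Longrightarrow> Bt \<subseteq> {1..msum d mm + 1}"
  unfolding Bset_def using blk_subset_nodes by fastforce

lemma Bset_inter_blk_0: "Bt \<in> Bset d mm k \<Longrightarrow> Bt \<inter> blk d mm 0 \<subseteq> {msum d mm + 1}"
proof
  fix x assume "Bt \<in> Bset d mm k" "x \<in> Bt \<inter> blk d mm 0"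
  then obtain j where j: "j \<in> {1..d+1}" "x \<in> blk d mm j" "x \<in> blk d mm 0"
    unfolding Bset_def by blast
  then show "x \<in> {msum d mm + 1}"
    using blk_disjoint_blk_0[of j d mm] by (cases "j = d + 1") (auto simp: blk_Suc_d)
qed

lemma msum_Suc_notin_jj:
  assumes "\<forall>i\<in>{1..d}. jj i \<in> blk d mm i"
  shows "msum d mm + 1 \<notin> jj ` {1..d}"
proof
  assume "msum d mm + 1 \<in> jj ` {1..d}"
  then obtain i where "i \<in> {1..d}" "msum d mm + 1 \<in> blk d mm i" using assms by auto
  then show False using blk_eq_if_mem[where i = i and j = "d + 1" and d = d and mm = mm] by (simp add: blk_Suc_d)
qed

lemma Fset_card:
  assumes "\<forall>i\<in>{1..d}. jj i \<in> blk d mm i"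
  shows "finite (Fset d mm jj)" "card (Fset d mm jj) = d + 1"
proof -
  have "inj_on jj {1..d}"
  proof (rule inj_onI)
    fix i j assume ij: "i \<in> {1..d}" "j \<in> {1..d}" "jj i = jj j"
    then have "jj i \<in> blk d mm i" "jj i \<in> blk d mm j" using assms by (metis, simp)
    then show "i = j" by (rule blk_eq_if_mem[rotated 2]) (use ij in auto)
  qed
  then show "finite (Fset d mm jj)" "card (Fset d mm jj) = d + 1"
    using msum_Suc_notin_jj[OF assms] by (simp_all add: Fset_def card_image)
qed

lemma Fset_subset_nodes:
  assumes "\<forall>i\<in>{1..d}. jj i \<in> blk d mm i"
  shows "Fset d mm jj \<subseteq> {1..msum d mm + 1}"
  using assms blk_subset_nodes[of _ d mm] by (fastforce simp: Fset_def)

lemma A_compatible_blk_0_closed: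
  assumes "multidigraph {1..msum d mm + 1} E s t" "A_compatible d mm A b jj E s t \<pi>"
    and "e \<in> E" "s e \<in> blk d mm 0"
  shows "t e \<in> blk d mm 0"
proof (rule ccontr)
  assume "t e \<notin> blk d mm 0"
  moreover have "t e \<in> {1..msum d mm + 1}" using assms(1,3) by (simp add: multidigraph_def)
  ultimately obtain j where j: "j \<in> {1..d}" "t e \<in> blk d mm j" using blk_cover[of "t e" d mm] by blast
  have "\<forall>e\<in>E. \<forall>i\<in>{0..d}. \<forall>j\<in>{1..d}. i \<noteq> j \<longrightarrow> \<not> (s e \<in> blk d mm i \<and> t e \<in> blk d mm j)"
    using assms(2) unfolding A_compatible_def by blast
  from this[rule_format, of e 0 j] show False using assms(3,4) j by auto
qed

lemma groot_msum_Suc: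
  assumes graph: "multidigraph {1..msum d mm + 1} E s t" and compat: "A_compatible d mm A b jj E s t \<pi>"
    and "Bt \<in> Bset d mm k" "finite Bt" "\<xi> \<in> Theta {1..msum d mm + 1} E s t (insert l Bt)"
  shows "groot {1..msum d mm + 1} s t \<xi> (msum d mm + 1)
    = (if msum d mm + 1 \<in> insert l Bt then msum d mm + 1 else l)"
proof (rule groot_eq_if_forward_closed[OF assms(5)])
  show "blk d mm 0 \<subseteq> {1..msum d mm + 1}" "msum d mm + 1 \<in> blk d mm 0"
    using sum_blocks_le_msum[of mm d] by (auto simp: blk_0)
  show "\<forall>e\<in>\<xi>. s e \<in> blk d mm 0 \<longrightarrow> t e \<in> blk d mm 0"
    using assms(5) A_compatible_blk_0_closed[OF graph compat] by (auto simp: Theta_def)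
  show "insert l Bt \<inter> blk d mm 0 \<subseteq> {l, msum d mm + 1}" using Bset_inter_blk_0[OF assms(3)] by auto
qed (use assms(4) in simp_all)

theorem lemma5p2:
  fixes d :: nat and mm :: "nat \<Rightarrow> nat"
    and A :: "nat \<Rightarrow> nat \<Rightarrow> 'a::ordered_comm_ring" and b :: "nat \<Rightarrow> 'a"
    and jj :: "nat \<Rightarrow> nat"
    and E :: "'e set" and s t :: "'e \<Rightarrow> nat" and \<pi> :: "'e \<Rightarrow> 'a"
    and k l :: nat and Bt :: "nat set" and \<zeta> :: "'e set"
  assumes blockA: "\<forall>i\<in>{1..d}. \<forall>r\<in>blk d mm i. \<forall>c\<in>{1..msum d mm} - blk d mm i. A r c = 0"
    and blockb: "\<forall>i\<in>{1..d}. card {r\<in>blk d mm i. b r \<noteq> 0} \<le> 1"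
    and jj_in: "\<forall>i\<in>{1..d}. jj i \<in> blk d mm i"
    and b_zero: "\<forall>j\<in>{1..msum d mm - mm 0}. j \<notin> jj ` {1..d} \<longrightarrow> b j = 0"
    and graph: "multidigraph {1..msum d mm + 1} E s t"
    and compat: "A_compatible d mm A b jj E s t \<pi>"
    and pg: "P_graph E s t \<pi>"
    and star: "\<forall>l'\<in>{1..msum d mm}. \<forall>i\<in>{1..d}. \<forall>es.
                 dpath s t E (jj i) es l' \<and> set es \<inter> Eneg E \<pi> \<noteq> {}
                 \<longrightarrow> msum d mm + 1 \<in> set (jj i # map t es)"
    and k: "k \<in> {1..d+1}"
    and Bt: "Bt \<in> Bset d mm k"
    and l: "l \<in> {1..msum d mm + 1} - Bt"
    and zeta: "\<zeta> \<in> ThetaF {1..msum d mm + 1} E s t (Fset d mm jj) (insert l Bt)"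
  shows "(\<forall>r\<in>{1..d}. \<forall>i\<in>insert l Bt. \<forall>es.
            dpath s t \<zeta> (jj r) es i \<longrightarrow> set es \<inter> Eneg E \<pi> = {})
       \<and> (\<forall>\<zeta>'\<in>Theta {1..msum d mm + 1} E s t (insert l Bt).
            (\<forall>r\<in>{1..d}. groot {1..msum d mm + 1} s t \<zeta>' (jj r) = groot {1..msum d mm + 1} s t \<zeta> (jj r))
            \<longrightarrow> groot {1..msum d mm + 1} s t \<zeta>' (msum d mm + 1) = groot {1..msum d mm + 1} s t \<zeta> (msum d mm + 1)
                \<and> \<zeta>' \<in> ThetaF {1..msum d mm + 1} E s t (Fset d mm jj) (insert l Bt))"
proof -
  let ?n = "msum d mm" and ?V = "{1..msum d mm + 1}" and ?F = "Fset d mm jj" and ?B = "insert l Bt"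
  have finB: "finite Bt" and cardFB: "card ?F = card ?B"
    using Bset_card[OF k Bt] Fset_card[OF jj_in] l by auto
  have finF: "finite ?F" and FV: "?F \<subseteq> ?V" and n1F: "?n + 1 \<in> ?F"
    using Fset_card[OF jj_in] Fset_subset_nodes[OF jj_in] by (auto simp: Fset_def)
  have zT: "\<zeta> \<in> Theta ?V E s t ?B" using zeta by (simp add: ThetaF_def)
  have targets: "\<forall>e\<in>\<zeta>. t e \<in> ?V" using zT graph by (auto simp: Theta_def multidigraph_def)
  show ?thesis
  proof (intro conjI ballI allI impI)
    fix r i es assume r: "r \<in> {1..d}" and i: "i \<in> ?B" and path: "dpath s t \<zeta> (jj r) es i"
    have "jj r \<in> ?F" "?n + 1 \<noteq> jj r" using r msum_Suc_notin_jj[OF jj_in] by (auto simp: Fset_def)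
    then have "?n + 1 \<notin> set (jj r # map t es)"
      using ThetaF_dpath_avoids[OF zeta finF cardFB FV targets path _ n1F] by blast
    moreover have "?n + 1 \<in> set (jj r # map t es)" if "set es \<inter> Eneg E \<pi> \<noteq> {}"
    proof (cases "i = ?n + 1")
      case False
      then have "i \<in> {1..?n}" using i l Bset_subset_nodes[OF Bt] by auto
      moreover have "dpath s t E (jj r) es i" using path zT by (auto simp: Theta_def intro: dpath_mono)
      ultimately show ?thesis using star r that by blast
    qed (use dpath_end_mem[OF path] in simp)
    ultimately show "set es \<inter> Eneg E \<pi> = {}" by blast
  next
    fix \<zeta>' assume \<zeta>': "\<zeta>' \<in> Theta ?V E s t ?B"
      and agree: "\<forall>r\<in>{1..d}. groot ?V s t \<zeta>' (jj r) = groot ?V s t \<zeta> (jj r)"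
    show n1: "groot ?V s t \<zeta>' (?n + 1) = groot ?V s t \<zeta> (?n + 1)"
      using groot_msum_Suc[OF graph compat Bt _ \<zeta>'] groot_msum_Suc[OF graph compat Bt _ zT] finB by simp
    show "\<zeta>' \<in> ThetaF ?V E s t ?F ?B"
      using Theta_in_ThetaF_if_groot_agree[OF zeta \<zeta>' _ finF cardFB FV] agree n1
      by (simp add: Fset_def)
  qed
qed

end
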